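(* Let $(X,\pi)$ be a finite symmetric two-player game with relative payoff game $(X,\Delta)$. If $(X,\Delta)$ has no pure saddle point, then imitation is subject to a money pump.
   Context: A symmetric two-player game $(X,\pi)$ has common action set $X$ and payoff $\pi:X\times X\to\mathbb{R}$ ($\pi(x,y)$ = payoff of the player choosing $x$ against $y$). Relative payoff: $\Delta(x,y)=\pi(x,y)-\pi(y,x)$; $(X,\Delta)$ is a zero-sum game where player 1 choosing $x$ against $y$ gets $\Delta(x,y)$. A pure saddle point is $(x^*,y^* )$ with $\Delta(x,y^* )\le\Delta(x^*,y^* )\le\Delta(x^*,y)$ for all $x,y\in X$. Imitate-the-best: given initial $y_0\in X$ and any opponent sequence $(x_t)_{t\ge0}$, $y_t=x_{t-1}$ if $\Delta(x_{t-1},y_{t-1})>0$ and $y_t=y_{t-1}$ otherwise. Imitation is not subject to a money pump if there is $M\in\mathbb{R}_+$ such that for every $y_0\in X$ and every sequence $(x_t)$, $\limsup_{T\to\infty}\sum_{t=0}^T\Delta(x_t,y_t)\le M$; otherwise it is subject to a money pump. *)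

theory Defs
  imports "HOL-Analysis.Analysis"
begin

definition rel_payoff :: "('a \<Rightarrow> 'a \<Rightarrow> real) \<Rightarrow> 'a \<Rightarrow> 'a \<Rightarrow> real" where
  "rel_payoff \<pi> x y = \<pi> x y - \<pi> y x"

definition pure_saddle_point :: "'a set \<Rightarrow> ('a \<Rightarrow> 'a \<Rightarrow> real) \<Rightarrow> 'a \<Rightarrow> 'a \<Rightarrow> bool" where
  "pure_saddle_point X D xs ys \<longleftrightarrow> xs \<in> X \<and> ys \<in> X \<and>
     (\<forall>x\<in>X. D x ys \<le> D xs ys) \<and> (\<forall>y\<in>X. D xs ys \<le> D xs y)"

fun imitate :: "('a \<Rightarrow> 'a \<Rightarrow> real) \<Rightarrow> 'a \<Rightarrow> (nat \<Rightarrow> 'a) \<Rightarrow> nat \<Rightarrow> 'a" where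
  "imitate D y0 x 0 = y0"
| "imitate D y0 x (Suc t) =
     (if D (x t) (imitate D y0 x t) > 0 then x t else imitate D y0 x t)"

definition not_subject_to_money_pump :: "'a set \<Rightarrow> ('a \<Rightarrow> 'a \<Rightarrow> real) \<Rightarrow> bool" where
  "not_subject_to_money_pump X \<pi> \<longleftrightarrow>
     (\<exists>M::real. M \<ge> 0 \<and> (\<forall>y0\<in>X. \<forall>x::nat \<Rightarrow> 'a. (\<forall>t. x t \<in> X) \<longrightarrow>
        limsup (\<lambda>T. ereal (\<Sum>t\<le>T. rel_payoff \<pi> (x t) (imitate (rel_payoff \<pi>) y0 x t)))
          \<le> ereal M))"

definition subject_to_money_pump :: "'a set \<Rightarrow> ('a \<Rightarrow> 'a \<Rightarrow> real) \<Rightarrow> bool" where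
  "subject_to_money_pump X \<pi> \<longleftrightarrow> \<not> not_subject_to_money_pump X \<pi>"

end

theory Submission
  imports Defs
begin

text \<open>Without a pure saddle point every strategy y is strictly beaten by some
f y: since the relative payoff is antisymmetric, (y, y) would otherwise be a saddle point.
An opponent who always plays f of the imitator's current strategy wins every round, so the
imitator keeps copying; by finiteness each round earns at least a fixed margin, and the
cumulative relative payoff diverges.\<close>

lemma partial_sums_tendsto_PInfty:
  fixes a :: "nat \<Rightarrow> real"
  assumes "0 < \<epsilon>" and "\<And>t. \<epsilon> \<le> a t"
  shows "(\<lambda>T. ereal (\<Sum>t\<le>T. a t)) \<longlonglongrightarrow> \<infinity>"
proof -
  have lower: "\<epsilon> * real (Suc T) \<le> (\<Sum>t\<le>T. a t)" for T
    using sum_mono[of "{..T}" "\<lambda>_. \<epsilon>" a] assms(2) by (simp add: mult.commute)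
  have "filterlim (\<lambda>T. \<epsilon> * real (Suc T)) at_top sequentially"
    by (rule filterlim_tendsto_pos_mult_at_top[OF tendsto_const assms(1)])
      (rule filterlim_compose[OF filterlim_real_sequentially filterlim_Suc])
  then have "filterlim (\<lambda>T. \<Sum>t\<le>T. a t) at_top sequentially"
    by (rule filterlim_at_top_mono) (intro always_eventually allI lower)
  then show ?thesis
    by (simp add: tendsto_PInfty filterlim_at_top_dense)
qed

lemma beaten_if_no_pure_saddle_point:
  assumes "\<not> (\<exists>xs ys. pure_saddle_point X (rel_payoff \<pi>) xs ys)" and "y \<in> X"
  shows "\<exists>x\<in>X. rel_payoff \<pi> x y > 0"
  using assms unfolding pure_saddle_point_def rel_payoff_def by force

lemma finite_uniform_positive_lower_bound:
  fixes g :: "'a \<Rightarrow> real"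
  assumes "finite X" and "\<And>y. y \<in> X \<Longrightarrow> 0 < g y"
  obtains \<epsilon> where "0 < \<epsilon>" and "\<And>y. y \<in> X \<Longrightarrow> \<epsilon> \<le> g y"
proof (cases "X = {}")
  case True
  then show ?thesis using that[of 1] by simp
next
  case False
  show ?thesis
    by (rule that[of "Min (g ` X)"]) (use assms False in auto)
qed

lemma imitate_iterate:
  assumes "y0 \<in> X" and "\<And>y. y \<in> X \<Longrightarrow> f y \<in> X \<and> 0 < D (f y) y"
  shows "imitate D y0 (\<lambda>t. (f ^^ Suc t) y0) t = (f ^^ t) y0"
proof -
  have "(f ^^ t) y0 \<in> X" for t
    using assms by (induction t) auto
  then show ?thesis
    using assms(2) by (induction t) auto
qed

theorem proposition1:
  fixes X :: "'a set" and \<pi> :: "'a \<Rightarrow> 'a \<Rightarrow> real"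
  assumes "finite X" and "X \<noteq> {}"
    and "\<not> (\<exists>xs ys. pure_saddle_point X (rel_payoff \<pi>) xs ys)"
  shows "subject_to_money_pump X \<pi>"
proof -
  define D where "D = rel_payoff \<pi>"
  obtain f where f: "\<And>y. y \<in> X \<Longrightarrow> f y \<in> X \<and> 0 < D (f y) y"
    using beaten_if_no_pure_saddle_point[OF assms(3)] unfolding D_def by metis
  obtain \<epsilon> where "0 < \<epsilon>" and margin: "\<And>y. y \<in> X \<Longrightarrow> \<epsilon> \<le> D (f y) y"
    using finite_uniform_positive_lower_bound[OF assms(1), of "\<lambda>y. D (f y) y"] f by blast
  obtain y0 where y0: "y0 \<in> X" using assms(2) by blast
  define x where "x t = (f ^^ Suc t) y0" for t
  have orbit: "(f ^^ t) y0 \<in> X" for t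
    using y0 f by (induction t) auto
  have imitator: "imitate D y0 x t = (f ^^ t) y0" for t
    unfolding x_def using imitate_iterate[of y0 X f D] y0 f by blast
  have "\<epsilon> \<le> D (x t) (imitate D y0 x t)" for t
    unfolding imitator x_def using margin[OF orbit] by simp
  then have pump: "limsup (\<lambda>T. ereal (\<Sum>t\<le>T. D (x t) (imitate D y0 x t))) = \<infinity>"
    using partial_sums_tendsto_PInfty[OF \<open>0 < \<epsilon>\<close>] by (simp add: lim_imp_Limsup)
  have x_in_X: "x t \<in> X" for t
    unfolding x_def using orbit by (simp del: funpow.simps)
  show ?thesis
    unfolding subject_to_money_pump_def not_subject_to_money_pump_def
  proof clarify
    fix M
    assume "\<forall>y0\<in>X. \<forall>x. (\<forall>t. x t \<in> X) \<longrightarrow>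
      limsup (\<lambda>T. ereal (\<Sum>t\<le>T. rel_payoff \<pi> (x t) (imitate (rel_payoff \<pi>) y0 x t))) \<le> ereal M"
    from this[rule_format, of y0 x, OF y0 x_in_X] pump show False
      unfolding D_def by simp
  qed
qed

end
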